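(* Let $b\ge 2$ and let $G$ be a grid-labelled graph of type $(2,b)$ with at least one edge. Then $\rho(G)$ is separable if and only if $D(G)=D(\Gamma(G))$.
   Context: A grid-labelled graph of type $(a,b)$ is a simple graph $G$ whose vertex set is the grid $[a]\times[b]$; $D(G)$ is its degree matrix and $L(G)=D(G)-A(G)$ its combinatorial Laplacian. If $G$ has $m\ge1$ edges, $\rho(G)=L(G)/(2m)$ is a density matrix on $\mathbb{C}^a\otimes\mathbb{C}^b$ with vertex $(i,j)$ corresponding to $|i\rangle\otimes|j\rangle$. Separable means a convex combination of tensor products of density matrices. The partial transpose $\Gamma(G)$ is the grid-labelled graph of type $(a,b)$ with edge set $\{\{(k,j),(i,l)\}:\{(i,j),(k,l)\}\in E(G)\}$. *)

theory Defs
  imports Complex_Main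
begin

text \<open>Grid-labelled graphs of type (a,b): vertex set [a] x [b], rendered 0-based as
  {0..<a} x {0..<b}. Operators on C^a (x) C^b are matrices indexed by grid vertices,
  vertex (i,j) corresponding to |i> (x) |j>.\<close>

type_synonym vertex = "nat \<times> nat"
type_synonym gmatrix = "vertex \<Rightarrow> vertex \<Rightarrow> complex"

definition grid :: "nat \<Rightarrow> nat \<Rightarrow> vertex set" where
  "grid a b = {0..<a} \<times> {0..<b}"

definition grid_graph :: "nat \<Rightarrow> nat \<Rightarrow> vertex set set \<Rightarrow> bool" where
  "grid_graph a b E \<longleftrightarrow>
     E \<subseteq> {{u, v} | u v. u \<in> grid a b \<and> v \<in> grid a b \<and> u \<noteq> v}"

definition deg :: "vertex set set \<Rightarrow> vertex \<Rightarrow> nat" where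
  "deg E v = card {e \<in> E. v \<in> e}"

definition degree_matrix :: "vertex set set \<Rightarrow> gmatrix" where
  "degree_matrix E u v = (if u = v then of_nat (deg E u) else 0)"

definition adjacency_matrix :: "vertex set set \<Rightarrow> gmatrix" where
  "adjacency_matrix E u v = (if {u, v} \<in> E then 1 else 0)"

definition laplacian :: "vertex set set \<Rightarrow> gmatrix" where
  "laplacian E u v = degree_matrix E u v - adjacency_matrix E u v"

definition rho :: "vertex set set \<Rightarrow> gmatrix" where
  "rho E u v = laplacian E u v / of_nat (2 * card E)"

definition partial_transpose :: "vertex set set \<Rightarrow> vertex set set" where
  "partial_transpose E = {{(k, j), (i, l)} | i j k l. {(i, j), (k, l)} \<in> E}"

definition density :: "'i set \<Rightarrow> ('i \<Rightarrow> 'i \<Rightarrow> complex) \<Rightarrow> bool" where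
  "density I M \<longleftrightarrow>
     (\<forall>x\<in>I. \<forall>y\<in>I. M x y = cnj (M y x)) \<and>
     (\<forall>w :: 'i \<Rightarrow> complex.
        Im (\<Sum>x\<in>I. \<Sum>y\<in>I. cnj (w x) * M x y * w y) = 0 \<and>
        Re (\<Sum>x\<in>I. \<Sum>y\<in>I. cnj (w x) * M x y * w y) \<ge> 0) \<and>
     (\<Sum>x\<in>I. M x x) = 1"

text \<open>Separability on C^a (x) C^b: a (finite) convex combination of tensor
  products A (x) B of density matrices, (A (x) B)((i,j),(k,l)) = A i k * B j l.\<close>
definition separable :: "nat \<Rightarrow> nat \<Rightarrow> gmatrix \<Rightarrow> bool" where
  "separable a b \<rho> \<longleftrightarrow>
     (\<exists>(n::nat) (p :: nat \<Rightarrow> real) (A :: nat \<Rightarrow> nat \<Rightarrow> nat \<Rightarrow> complex)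
        (B :: nat \<Rightarrow> nat \<Rightarrow> nat \<Rightarrow> complex).
        (\<forall>k<n. p k \<ge> 0) \<and> (\<Sum>k<n. p k) = 1 \<and>
        (\<forall>k<n. density {0..<a} (A k) \<and> density {0..<b} (B k)) \<and>
        (\<forall>u\<in>grid a b. \<forall>v\<in>grid a b.
           \<rho> u v = (\<Sum>k<n. of_real (p k) * A k (fst u) (fst v) * B k (snd u) (snd v))))"

end

theory Submission
  imports Defs
begin

text \<open>
  Every row of the Laplacian L sums to zero, so the entries of rho add up to 0.
  For a separable rho = sum_k p_k A_k (x) B_k that total is sum_k p_k (1' A_k 1) (1' B_k 1), a sum of
  nonnegative terms, so in every term A_k 1 = 0 or B_k 1 = 0: a positive semidefinite form that
  vanishes at a vector annihilates it. Hence the rows of the partial transpose of rho sum to zero,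
  and for the Laplacian these row sums are deg G - deg Gamma(G).

  Conversely, on two rows the edges inside a row have product Laplacians, while the edges
  {(0,p), (1,q)} form a digraph p -> q on [b] which is balanced exactly when D(G) = D(Gamma(G)).
  A balanced digraph is an arc-disjoint union of cycles, and the Laplacian of the edges
  (0, h i) - (1, h (i+1)) along a cycle of length k is separable: the discrete Fourier transform
  writes it as the average over m of the products of (1, - w^(-m)) and sum_i w^(m i) e_(h i),
  with w a primitive k-th root of unity.
\<close>

lemma density_trace: "density I A \<Longrightarrow> (\<Sum>i\<in>I. A i i) = 1"
  unfolding density_def by blast

lemma density_hermitian: "density I A \<Longrightarrow> x \<in> I \<Longrightarrow> y \<in> I \<Longrightarrow> A x y = cnj (A y x)"
  unfolding density_def by blast

lemma density_form_nonneg: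
  assumes "density I A"
  shows "(\<Sum>x\<in>I. \<Sum>y\<in>I. cnj (w x) * A x y * w y) = of_real (Re (\<Sum>x\<in>I. \<Sum>y\<in>I. cnj (w x) * A x y * w y))"
    and "Re (\<Sum>x\<in>I. \<Sum>y\<in>I. cnj (w x) * A x y * w y) \<ge> 0"
proof -
  have "Im (\<Sum>x\<in>I. \<Sum>y\<in>I. cnj (w x) * A x y * w y) = 0"
    "Re (\<Sum>x\<in>I. \<Sum>y\<in>I. cnj (w x) * A x y * w y) \<ge> 0"
    using assms unfolding density_def by blast+
  then show "(\<Sum>x\<in>I. \<Sum>y\<in>I. cnj (w x) * A x y * w y) = of_real (Re (\<Sum>x\<in>I. \<Sum>y\<in>I. cnj (w x) * A x y * w y))"
    and "Re (\<Sum>x\<in>I. \<Sum>y\<in>I. cnj (w x) * A x y * w y) \<ge> 0"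
    by (simp_all only: complex_eq_iff Re_complex_of_real Im_complex_of_real)
qed

lemma density_total_sum_nonneg:
  assumes "density I A"
  shows "(\<Sum>x\<in>I. \<Sum>y\<in>I. A x y) = of_real (Re (\<Sum>x\<in>I. \<Sum>y\<in>I. A x y))"
    and "Re (\<Sum>x\<in>I. \<Sum>y\<in>I. A x y) \<ge> 0"
  using density_form_nonneg[OF assms, of "\<lambda>_. 1"] by simp_all

lemma density_rank_one:
  fixes x :: "'i \<Rightarrow> complex"
  assumes "finite I" and "(\<Sum>i\<in>I. (cmod (x i))\<^sup>2) = s" and "s > 0"
  shows "density I (\<lambda>i j. x i * cnj (x j) / of_real s)"
  unfolding density_def
proof (intro conjI allI ballI)
  fix w :: "'i \<Rightarrow> complex"
  define z where "z = (\<Sum>i\<in>I. cnj (w i) * x i)"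
  have "(\<Sum>i\<in>I. \<Sum>j\<in>I. cnj (w i) * (x i * cnj (x j) / of_real s) * w j) = z * cnj z / of_real s"
    unfolding z_def
    by (simp add: sum_distrib_left sum_distrib_right sum_divide_distrib mult_ac)
  also have "\<dots> = of_real ((cmod z)\<^sup>2 / s)"
    by (simp add: complex_norm_square[symmetric])
  finally have form: "(\<Sum>i\<in>I. \<Sum>j\<in>I. cnj (w i) * (x i * cnj (x j) / of_real s) * w j)
    = of_real ((cmod z)\<^sup>2 / s)" .
  show "Im (\<Sum>i\<in>I. \<Sum>j\<in>I. cnj (w i) * (x i * cnj (x j) / of_real s) * w j) = 0"
    unfolding form by simp
  show "0 \<le> Re (\<Sum>i\<in>I. \<Sum>j\<in>I. cnj (w i) * (x i * cnj (x j) / of_real s) * w j)"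
    unfolding form using assms(3) by simp
next
  have "(\<Sum>i\<in>I. x i * cnj (x i)) = of_real s"
    using assms(2) by (simp flip: complex_norm_square of_real_sum of_real_power)
  then show "(\<Sum>i\<in>I. x i * cnj (x i) / of_real s) = 1"
    using assms(3) by (simp add: sum_divide_distrib[symmetric])
qed simp

lemma sum_norm_square_pos:
  fixes x :: "'i \<Rightarrow> complex"
  assumes "finite I" "i \<in> I" "x i \<noteq> 0"
  shows "(\<Sum>i\<in>I. (cmod (x i))\<^sup>2) > 0"
  using assms by (intro sum_pos2[of I i]) auto

lemma quadratic_nonneg_imp_linear_coeff_zero:
  fixes c d :: real
  assumes "\<And>t. 0 \<le> c * t + d * t\<^sup>2"
  shows "c = 0"
proof (rule ccontr)
  assume "c \<noteq> 0"
  define s where "s = \<bar>d\<bar> + 1"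
  have "s > 0" "d < s"
    unfolding s_def by auto
  have "0 \<le> c * (- c / s) + d * (- c / s)\<^sup>2"
    by (rule assms)
  also have "\<dots> = c\<^sup>2 * (d - s) / s\<^sup>2"
    using \<open>s > 0\<close> by (simp add: field_simps power2_eq_square)
  also have "\<dots> < 0"
    using \<open>c \<noteq> 0\<close> \<open>s > 0\<close> \<open>d < s\<close> by (intro divide_neg_pos mult_pos_neg) auto
  finally show False by simp
qed

lemma density_form_zero_imp_kernel:
  assumes "finite I" "density I A" "(\<Sum>x\<in>I. \<Sum>y\<in>I. cnj (w x) * A x y * w y) = 0" "x \<in> I"
  shows "(\<Sum>y\<in>I. A x y * w y) = 0"
proof -
  define Q where "Q v = (\<Sum>x\<in>I. \<Sum>y\<in>I. cnj (v x) * A x y * v y)" for v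
  define r where "r x = (\<Sum>y\<in>I. A x y * w y)" for x
  define N where "N = (\<Sum>x\<in>I. (cmod (r x))\<^sup>2)"
  have norm_sum: "(\<Sum>x\<in>I. cnj (r x) * r x) = of_real N"
    unfolding N_def by (simp add: mult.commute flip: complex_norm_square)
  have cross_rw: "(\<Sum>x\<in>I. \<Sum>y\<in>I. cnj (r x) * A x y * w y) = of_real N"
    unfolding norm_sum[symmetric] r_def by (simp add: sum_distrib_left mult.assoc)
  have cross_wr: "(\<Sum>x\<in>I. \<Sum>y\<in>I. cnj (w x) * A x y * r y) = of_real N"
  proof -
    have "(\<Sum>x\<in>I. cnj (w x) * A x y) = cnj (r y)" if "y \<in> I" for y
      unfolding r_def cnj_sum using density_hermitian[OF assms(2) _ that]
      by (intro sum.cong refl) (simp add: mult.commute)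
    then show ?thesis
      unfolding norm_sum[symmetric]
      by (subst sum.swap) (simp add: sum_distrib_right[symmetric])
  qed
  have "Q (\<lambda>x. w x + of_real t * r x) = of_real (2 * t * N) + (of_real t)\<^sup>2 * Q r" for t
  proof -
    have "Q (\<lambda>x. w x + of_real t * r x) = (\<Sum>x\<in>I. \<Sum>y\<in>I. cnj (w x) * A x y * w y
        + of_real t * (cnj (w x) * A x y * r y) + of_real t * (cnj (r x) * A x y * w y)
        + (of_real t)\<^sup>2 * (cnj (r x) * A x y * r y))"
      unfolding Q_def by (intro sum.cong refl) (simp add: algebra_simps power2_eq_square)
    also have "\<dots> = Q w + of_real t * (\<Sum>x\<in>I. \<Sum>y\<in>I. cnj (w x) * A x y * r y)
        + of_real t * (\<Sum>x\<in>I. \<Sum>y\<in>I. cnj (r x) * A x y * w y) + (of_real t)\<^sup>2 * Q r"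
      unfolding Q_def by (simp only: sum.distrib sum_distrib_left)
    finally show ?thesis
      using assms(3) unfolding Q_def cross_rw cross_wr by simp
  qed
  then have "0 \<le> 2 * N * t + Re (Q r) * t\<^sup>2" for t
    using density_form_nonneg(2)[OF assms(2), of "\<lambda>x. w x + of_real t * r x"]
    unfolding Q_def by (simp add: mult_ac)
  then have "2 * N = 0"
    by (rule quadratic_nonneg_imp_linear_coeff_zero)
  then have "r x = 0"
    unfolding N_def using assms(1,4) by (simp add: sum_nonneg_eq_0_iff)
  then show ?thesis
    unfolding r_def .
qed

lemma density_total_sum_zero_imp_row_sum_zero:
  assumes "finite I" "density I A" "(\<Sum>x\<in>I. \<Sum>y\<in>I. A x y) = 0" "x \<in> I"
  shows "(\<Sum>y\<in>I. A x y) = 0"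
  using density_form_zero_imp_kernel[OF assms(1,2), of "\<lambda>_. 1"] assms(3,4) by simp

lemma density_total_sum_zero_imp_column_sum_zero:
  assumes "finite I" "density I A" "(\<Sum>x\<in>I. \<Sum>y\<in>I. A x y) = 0" "x \<in> I"
  shows "(\<Sum>y\<in>I. A y x) = 0"
proof -
  have "(\<Sum>y\<in>I. A y x) = cnj (\<Sum>y\<in>I. A x y)"
    unfolding cnj_sum using density_hermitian[OF assms(2) _ assms(4)] by (intro sum.cong) auto
  then show ?thesis
    using density_total_sum_zero_imp_row_sum_zero[OF assms] by simp
qed

section \<open>The cone of separable matrices\<close>

lemma sum_grid: "(\<Sum>u\<in>grid a b. f u) = (\<Sum>i<a. \<Sum>j<b. f (i, j))"
  unfolding grid_def by (simp add: sum.cartesian_product atLeast0LessThan)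

lemma sum_grid_product:
  fixes f g :: "nat \<Rightarrow> nat \<Rightarrow> 'a::comm_semiring_0"
  shows "(\<Sum>u\<in>grid a b. \<Sum>v\<in>grid a b. f (fst u) (fst v) * g (snd u) (snd v))
    = (\<Sum>i<a. \<Sum>i'<a. f i i') * (\<Sum>j<b. \<Sum>j'<b. g j j')"
proof -
  have "(\<Sum>u\<in>grid a b. \<Sum>v\<in>grid a b. f (fst u) (fst v) * g (snd u) (snd v))
      = (\<Sum>i<a. \<Sum>j<b. \<Sum>i'<a. \<Sum>j'<b. f i i' * g j j')"
    by (simp add: sum_grid)
  also have "\<dots> = (\<Sum>i<a. \<Sum>i'<a. \<Sum>j<b. \<Sum>j'<b. f i i' * g j j')"
    by (rule sum.cong[OF refl], rule sum.swap)
  also have "\<dots> = (\<Sum>i<a. \<Sum>i'<a. f i i' * (\<Sum>j<b. \<Sum>j'<b. g j j'))"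
    by (simp only: sum_distrib_left)
  also have "\<dots> = (\<Sum>i<a. \<Sum>i'<a. f i i') * (\<Sum>j<b. \<Sum>j'<b. g j j')"
    by (simp only: sum_distrib_right)
  finally show ?thesis .
qed

definition separable_cone :: "nat \<Rightarrow> nat \<Rightarrow> gmatrix \<Rightarrow> bool" where
  "separable_cone a b M \<longleftrightarrow>
     (\<exists>(n::nat) (p :: nat \<Rightarrow> real) (A :: nat \<Rightarrow> nat \<Rightarrow> nat \<Rightarrow> complex)
        (B :: nat \<Rightarrow> nat \<Rightarrow> nat \<Rightarrow> complex).
        (\<forall>k<n. p k \<ge> 0) \<and>
        (\<forall>k<n. density {0..<a} (A k) \<and> density {0..<b} (B k)) \<and>
        (\<forall>u\<in>grid a b. \<forall>v\<in>grid a b.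
           M u v = (\<Sum>k<n. of_real (p k) * A k (fst u) (fst v) * B k (snd u) (snd v))))"

lemma separable_coneE:
  assumes "separable_cone a b M"
  obtains n and p :: "nat \<Rightarrow> real" and A B where
    "\<And>k. k < n \<Longrightarrow> p k \<ge> 0"
    "\<And>k. k < n \<Longrightarrow> density {0..<a} (A k)" "\<And>k. k < n \<Longrightarrow> density {0..<b} (B k)"
    "\<And>u v. u \<in> grid a b \<Longrightarrow> v \<in> grid a b \<Longrightarrow>
       M u v = (\<Sum>k<n. of_real (p k) * A k (fst u) (fst v) * B k (snd u) (snd v))"
  using assms unfolding separable_cone_def by blast

lemma separable_cone_cong:
  assumes "separable_cone a b M" "\<And>u v. u \<in> grid a b \<Longrightarrow> v \<in> grid a b \<Longrightarrow> M u v = N u v"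
  shows "separable_cone a b N"
proof -
  obtain n and p :: "nat \<Rightarrow> real" and A B where H:
    "\<forall>k<n. p k \<ge> 0" "\<forall>k<n. density {0..<a} (A k) \<and> density {0..<b} (B k)"
    "\<forall>u\<in>grid a b. \<forall>v\<in>grid a b.
       M u v = (\<Sum>k<n. of_real (p k) * A k (fst u) (fst v) * B k (snd u) (snd v))"
    using assms(1) unfolding separable_cone_def by blast
  show ?thesis
    unfolding separable_cone_def
    by (intro exI[of _ n] exI[of _ p] exI[of _ A] exI[of _ B]) (simp add: H assms(2)[symmetric])
qed

lemma separable_cone_zero: "separable_cone a b (\<lambda>u v. 0)"
  unfolding separable_cone_def by (rule exI[of _ 0]) simp

lemma separable_cone_add:
  assumes "separable_cone a b M" "separable_cone a b N"
  shows "separable_cone a b (\<lambda>u v. M u v + N u v)"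
proof -
  obtain n1 and p1 :: "nat \<Rightarrow> real" and A1 B1 where M_dec:
    "\<And>k. k < n1 \<Longrightarrow> p1 k \<ge> 0"
    "\<And>k. k < n1 \<Longrightarrow> density {0..<a} (A1 k)" "\<And>k. k < n1 \<Longrightarrow> density {0..<b} (B1 k)"
    "\<And>u v. u \<in> grid a b \<Longrightarrow> v \<in> grid a b \<Longrightarrow>
       M u v = (\<Sum>k<n1. of_real (p1 k) * A1 k (fst u) (fst v) * B1 k (snd u) (snd v))"
    using assms(1) by (elim separable_coneE) blast
  obtain n2 and p2 :: "nat \<Rightarrow> real" and A2 B2 where N_dec:
    "\<And>k. k < n2 \<Longrightarrow> p2 k \<ge> 0"
    "\<And>k. k < n2 \<Longrightarrow> density {0..<a} (A2 k)" "\<And>k. k < n2 \<Longrightarrow> density {0..<b} (B2 k)"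
    "\<And>u v. u \<in> grid a b \<Longrightarrow> v \<in> grid a b \<Longrightarrow>
       N u v = (\<Sum>k<n2. of_real (p2 k) * A2 k (fst u) (fst v) * B2 k (snd u) (snd v))"
    using assms(2) by (elim separable_coneE) blast
  define p where "p k = (if k < n1 then p1 k else p2 (k - n1))" for k
  define A where "A k = (if k < n1 then A1 k else A2 (k - n1))" for k
  define B where "B k = (if k < n1 then B1 k else B2 (k - n1))" for k
  have sum_join: "(\<Sum>k<n1 + n2. F k) = (\<Sum>k<n1. F k) + (\<Sum>k<n2. F (n1 + k))"
    for F :: "nat \<Rightarrow> complex"
    by (induction n2) (simp_all add: add.assoc)
  have "M u v + N u v = (\<Sum>k<n1 + n2. of_real (p k) * A k (fst u) (fst v) * B k (snd u) (snd v))"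
    if "u \<in> grid a b" "v \<in> grid a b" for u v
    using that by (simp add: sum_join p_def A_def B_def M_dec(4) N_dec(4))
  moreover have "p k \<ge> 0" "density {0..<a} (A k)" "density {0..<b} (B k)" if "k < n1 + n2" for k
    using that M_dec N_dec by (simp_all add: p_def A_def B_def)
  ultimately show ?thesis
    unfolding separable_cone_def by (intro exI[of _ "n1 + n2"] exI[of _ p] exI[of _ A] exI[of _ B]) simp
qed

lemma separable_cone_scale:
  assumes "c \<ge> 0" "separable_cone a b M"
  shows "separable_cone a b (\<lambda>u v. of_real c * M u v)"
proof -
  obtain n and p :: "nat \<Rightarrow> real" and A B where
    "\<And>k. k < n \<Longrightarrow> p k \<ge> 0"
    "\<And>k. k < n \<Longrightarrow> density {0..<a} (A k)" "\<And>k. k < n \<Longrightarrow> density {0..<b} (B k)"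
    "\<And>u v. u \<in> grid a b \<Longrightarrow> v \<in> grid a b \<Longrightarrow>
       M u v = (\<Sum>k<n. of_real (p k) * A k (fst u) (fst v) * B k (snd u) (snd v))"
    using assms(2) by (elim separable_coneE) blast
  with assms(1) show ?thesis
    unfolding separable_cone_def
    by (intro exI[of _ n] exI[of _ "\<lambda>k. c * p k"] exI[of _ A] exI[of _ B])
      (simp add: sum_distrib_left mult.assoc)
qed

lemma separable_cone_sum:
  assumes "finite S" "\<And>s. s \<in> S \<Longrightarrow> separable_cone a b (M s)"
  shows "separable_cone a b (\<lambda>u v. \<Sum>s\<in>S. M s u v)"
  using assms
  by (induction S rule: finite_induct) (simp_all add: separable_cone_zero separable_cone_add)

lemma separable_cone_product:
  fixes x y :: "nat \<Rightarrow> complex"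
  shows "separable_cone a b (\<lambda>u v. x (fst u) * cnj (x (fst v)) * (y (snd u) * cnj (y (snd v))))"
proof (cases "(\<exists>i<a. x i \<noteq> 0) \<and> (\<exists>j<b. y j \<noteq> 0)")
  case True
  then obtain sx sy where
    sx: "(\<Sum>i\<in>{0..<a}. (cmod (x i))\<^sup>2) = sx" "sx > 0" and
    sy: "(\<Sum>j\<in>{0..<b}. (cmod (y j))\<^sup>2) = sy" "sy > 0"
    using sum_norm_square_pos[of "{0..<a}" _ x] sum_norm_square_pos[of "{0..<b}" _ y] by auto
  show ?thesis
    unfolding separable_cone_def
    by (rule exI[of _ 1], rule exI[of _ "\<lambda>_. sx * sy"],
        rule exI[of _ "\<lambda>_ i j. x i * cnj (x j) / of_real sx"],
        rule exI[of _ "\<lambda>_ i j. y i * cnj (y j) / of_real sy"])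
      (use sx sy density_rank_one[OF _ sx] density_rank_one[OF _ sy] in simp)
next
  case False
  then show ?thesis
    by (intro separable_cone_cong[OF separable_cone_zero]) (auto simp: grid_def)
qed

lemma trace_product_sum:
  fixes n :: nat and p :: "nat \<Rightarrow> real"
  assumes "\<forall>k<n. density {0..<a} (A k) \<and> density {0..<b} (B k)"
    and "\<forall>u\<in>grid a b. \<forall>v\<in>grid a b.
           M u v = (\<Sum>k<n. of_real (p k) * A k (fst u) (fst v) * B k (snd u) (snd v))"
  shows "(\<Sum>u\<in>grid a b. M u u) = of_real (\<Sum>k<n. p k)"
proof -
  have "(\<Sum>u\<in>grid a b. M u u)
      = (\<Sum>u\<in>grid a b. \<Sum>k<n. of_real (p k) * (A k (fst u) (fst u) * B k (snd u) (snd u)))"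
    using assms(2) by (intro sum.cong) (simp_all add: mult.assoc)
  also have "\<dots> = (\<Sum>i<a. \<Sum>j<b. \<Sum>k<n. of_real (p k) * (A k i i * B k j j))"
    by (simp only: sum_grid fst_conv snd_conv)
  also have "\<dots> = (\<Sum>k<n. \<Sum>i<a. \<Sum>j<b. of_real (p k) * (A k i i * B k j j))"
    by (simp only: sum.swap[where A = "{..<b}" and B = "{..<n}"]) (rule sum.swap)
  also have "\<dots> = (\<Sum>k<n. of_real (p k) * ((\<Sum>i<a. A k i i) * (\<Sum>j<b. B k j j)))"
    by (simp only: sum_product) (simp only: sum_distrib_left)
  also have "\<dots> = (\<Sum>k<n. of_real (p k))"
    using assms(1) density_trace[of "{0..<a}"] density_trace[of "{0..<b}"]
    by (intro sum.cong refl) (simp add: atLeast0LessThan)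
  finally show ?thesis by simp
qed

lemma separable_iff_cone:
  "separable a b M \<longleftrightarrow> separable_cone a b M \<and> (\<Sum>u\<in>grid a b. M u u) = 1"
proof
  assume "separable a b M"
  then obtain n and p :: "nat \<Rightarrow> real" and A B where H:
    "\<forall>k<n. p k \<ge> 0" "(\<Sum>k<n. p k) = 1"
    "\<forall>k<n. density {0..<a} (A k) \<and> density {0..<b} (B k)"
    "\<forall>u\<in>grid a b. \<forall>v\<in>grid a b.
       M u v = (\<Sum>k<n. of_real (p k) * A k (fst u) (fst v) * B k (snd u) (snd v))"
    unfolding separable_def by blast
  have "separable_cone a b M"
    unfolding separable_cone_def using H(1,3,4) by blast
  with trace_product_sum[OF H(3,4)] H(2)
  show "separable_cone a b M \<and> (\<Sum>u\<in>grid a b. M u u) = 1" by simp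
next
  assume cone_trace: "separable_cone a b M \<and> (\<Sum>u\<in>grid a b. M u u) = 1"
  then obtain n and p :: "nat \<Rightarrow> real" and A B where H:
    "\<forall>k<n. p k \<ge> 0"
    "\<forall>k<n. density {0..<a} (A k) \<and> density {0..<b} (B k)"
    "\<forall>u\<in>grid a b. \<forall>v\<in>grid a b.
       M u v = (\<Sum>k<n. of_real (p k) * A k (fst u) (fst v) * B k (snd u) (snd v))"
    unfolding separable_cone_def by blast
  have "of_real (\<Sum>k<n. p k) = (1 :: complex)"
    using trace_product_sum[OF H(2,3)] cone_trace by simp
  then have "(\<Sum>k<n. p k) = 1"
    by (simp only: of_real_eq_1_iff)
  with H show "separable a b M"
    unfolding separable_def by blast
qed

lemma total_sum_product_sum:
  fixes n :: nat and p :: "nat \<Rightarrow> real" and A B :: "nat \<Rightarrow> nat \<Rightarrow> nat \<Rightarrow> complex"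
  assumes "\<forall>u\<in>grid a b. \<forall>v\<in>grid a b.
           M u v = (\<Sum>k<n. of_real (p k) * A k (fst u) (fst v) * B k (snd u) (snd v))"
  shows "(\<Sum>u\<in>grid a b. \<Sum>v\<in>grid a b. M u v)
    = (\<Sum>k<n. of_real (p k) * (\<Sum>i<a. \<Sum>i'<a. A k i i') * (\<Sum>j<b. \<Sum>j'<b. B k j j'))"
proof -
  have "(\<Sum>u\<in>grid a b. \<Sum>v\<in>grid a b. M u v)
      = (\<Sum>k<n. \<Sum>u\<in>grid a b. \<Sum>v\<in>grid a b. of_real (p k) * A k (fst u) (fst v) * B k (snd u) (snd v))"
    using assms by (simp add: sum.swap[of _ "grid a b" "{..<n}"])
  also have "\<dots> = (\<Sum>k<n. of_real (p k) *
      (\<Sum>u\<in>grid a b. \<Sum>v\<in>grid a b. A k (fst u) (fst v) * B k (snd u) (snd v)))"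
    by (simp add: sum_distrib_left mult.assoc)
  also have "\<dots> = (\<Sum>k<n. of_real (p k) * (\<Sum>i<a. \<Sum>i'<a. A k i i') * (\<Sum>j<b. \<Sum>j'<b. B k j j'))"
    using sum_grid_product[where f = "A k" and g = "B k" for k] by (simp add: mult.assoc)
  finally show ?thesis .
qed

text \<open>The partial transpose of M has the entry M (i, j') (i', j) at ((i, j), (i', j')).\<close>

lemma partial_transpose_row_sum_product_sum:
  fixes n :: nat and p :: "nat \<Rightarrow> real" and A B :: "nat \<Rightarrow> nat \<Rightarrow> nat \<Rightarrow> complex"
  assumes "\<forall>u\<in>grid a b. \<forall>v\<in>grid a b.
           M u v = (\<Sum>k<n. of_real (p k) * A k (fst u) (fst v) * B k (snd u) (snd v))"
    and "i < a" "j < b"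
  shows "(\<Sum>i'<a. \<Sum>j'<b. M (i, j') (i', j))
    = (\<Sum>k<n. of_real (p k) * (\<Sum>i'<a. A k i i') * (\<Sum>j'<b. B k j' j))"
proof -
  have "(\<Sum>i'<a. \<Sum>j'<b. M (i, j') (i', j))
      = (\<Sum>i'<a. \<Sum>j'<b. \<Sum>k<n. of_real (p k) * (A k i i' * B k j' j))"
    using assms by (intro sum.cong refl) (simp add: grid_def mult.assoc)
  also have "\<dots> = (\<Sum>k<n. \<Sum>i'<a. \<Sum>j'<b. of_real (p k) * (A k i i' * B k j' j))"
    by (simp only: sum.swap[where A = "{..<b}" and B = "{..<n}"]) (rule sum.swap)
  also have "\<dots> = (\<Sum>k<n. of_real (p k) * ((\<Sum>i'<a. A k i i') * (\<Sum>j'<b. B k j' j)))"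
    by (simp only: sum_product) (simp only: sum_distrib_left)
  finally show ?thesis
    by (simp only: mult.assoc)
qed

lemma separable_cone_partial_transpose_row_sum:
  assumes "separable_cone a b M" "(\<Sum>u\<in>grid a b. \<Sum>v\<in>grid a b. M u v) = 0" "i < a" "j < b"
  shows "(\<Sum>i'<a. \<Sum>j'<b. M (i, j') (i', j)) = 0"
proof -
  obtain n and p :: "nat \<Rightarrow> real" and A B where
    p: "\<forall>k<n. p k \<ge> 0" and dens: "\<forall>k<n. density {0..<a} (A k) \<and> density {0..<b} (B k)" and
    M: "\<forall>u\<in>grid a b. \<forall>v\<in>grid a b.
       M u v = (\<Sum>k<n. of_real (p k) * A k (fst u) (fst v) * B k (snd u) (snd v))"
    using assms(1) unfolding separable_cone_def by blast
  define SA where "SA k = (\<Sum>x\<in>{0..<a}. \<Sum>y\<in>{0..<a}. A k x y)" for k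
  define SB where "SB k = (\<Sum>x\<in>{0..<b}. \<Sum>y\<in>{0..<b}. B k x y)" for k
  have SA: "SA k = of_real (Re (SA k))" "Re (SA k) \<ge> 0" if "k < n" for k
    unfolding SA_def using dens that density_total_sum_nonneg by blast+
  have SB: "SB k = of_real (Re (SB k))" "Re (SB k) \<ge> 0" if "k < n" for k
    unfolding SB_def using dens that density_total_sum_nonneg by blast+
  have "0 = (\<Sum>k<n. of_real (p k) * SA k * SB k)"
    using total_sum_product_sum[OF M] assms(2) unfolding SA_def SB_def atLeast0LessThan by simp
  also have "\<dots> = of_real (\<Sum>k<n. p k * Re (SA k) * Re (SB k))"
    unfolding of_real_sum using SA(1) SB(1) by (intro sum.cong refl) (metis lessThan_iff of_real_mult)
  finally have "(\<Sum>k<n. p k * Re (SA k) * Re (SB k)) = 0"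
    by (rule of_real_eq_0_iff[THEN iffD1, OF sym])
  then have "p k * Re (SA k) * Re (SB k) = 0" if "k < n" for k
    using that p SA(2) SB(2) by (subst (asm) sum_nonneg_eq_0_iff) auto
  then have "p k = 0 \<or> SA k = 0 \<or> SB k = 0" if "k < n" for k
    using that SA(1) SB(1) by (metis mult_eq_0_iff of_real_0)
  then have "of_real (p k) * (\<Sum>i'<a. A k i i') * (\<Sum>j'<b. B k j' j) = 0" if "k < n" for k
    using dens that assms(3,4)
      density_total_sum_zero_imp_row_sum_zero[of "{0..<a}" "A k" i]
      density_total_sum_zero_imp_column_sum_zero[of "{0..<b}" "B k" j]
    unfolding SA_def SB_def by (auto simp: atLeast0LessThan)
  then show ?thesis
    unfolding partial_transpose_row_sum_product_sum[OF M assms(3,4)] by (auto intro!: sum.neutral)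
qed

section \<open>Roots of unity and the discrete Fourier transform\<close>

lemma sum_lessThan_Suc_shift_periodic:
  fixes g :: "nat \<Rightarrow> 'a::cancel_comm_monoid_add"
  assumes "g k = g 0"
  shows "(\<Sum>i<k. g (Suc i)) = (\<Sum>i<k. g i)"
proof -
  have "g 0 + (\<Sum>i<k. g (Suc i)) = (\<Sum>i<k. g i) + g k"
    by (simp flip: sum.lessThan_Suc_shift)
  then show ?thesis
    using assms by (simp add: add.commute)
qed

definition unit_root :: "nat \<Rightarrow> complex" where
  "unit_root k = cis (2 * pi / real k)"

lemma unit_root_power: "unit_root k ^ i = cis (2 * pi * real i / real k)"
  unfolding unit_root_def DeMoivre by (simp add: mult_ac)

lemma unit_root_power_k [simp]: "k > 0 \<Longrightarrow> unit_root k ^ k = 1"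
  unfolding unit_root_power by simp

lemma cnj_unit_root_mult [simp]: "cnj (unit_root k) * unit_root k = 1"
  unfolding unit_root_def by (simp add: cis_cnj cis_mult)

lemma inj_on_unit_root_power: "k > 0 \<Longrightarrow> inj_on (\<lambda>i. unit_root k ^ i) {..<k}"
  unfolding unit_root_power using bij_betw_roots_unity by (rule bij_betw_imp_inj_on)

lemma unit_root_orthogonal:
  assumes "k > 0" "i < k" "j < k"
  shows "(\<Sum>m<k. unit_root k ^ (m * i) * cnj (unit_root k ^ (m * j))) = (if i = j then of_nat k else 0)"
proof -
  define z where "z = unit_root k ^ i * cnj (unit_root k ^ j)"
  have pow: "unit_root k ^ (m * n) = (unit_root k ^ n) ^ m" for m n
    by (metis power_mult mult.commute)
  have terms: "unit_root k ^ (m * i) * cnj (unit_root k ^ (m * j)) = z ^ m" for m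
    unfolding z_def pow by (simp add: power_mult_distrib)
  have cnj_power_mult: "cnj (unit_root k ^ j) * unit_root k ^ j = 1"
    by (simp flip: power_mult_distrib)
  show ?thesis
  proof (cases "i = j")
    case True
    then have "z = 1"
      unfolding z_def using cnj_power_mult by (simp add: mult.commute)
    with True show ?thesis
      unfolding terms by simp
  next
    case False
    have z_ne_1: "z \<noteq> 1"
    proof
      assume "z = 1"
      have "unit_root k ^ i = unit_root k ^ i * (cnj (unit_root k ^ j) * unit_root k ^ j)"
        by (simp only: cnj_power_mult mult_1_right)
      also have "\<dots> = z * unit_root k ^ j"
        unfolding z_def by (simp only: mult.assoc)
      finally have "unit_root k ^ i = unit_root k ^ j"
        using \<open>z = 1\<close> by simp
      with False assms show False
        using inj_on_unit_root_power[OF assms(1)] by (auto dest: inj_onD)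
    qed
    have "(unit_root k ^ n) ^ k = 1" for n
      unfolding pow[symmetric] using assms(1) by (simp add: power_mult)
    then have "z ^ k = 1"
      unfolding z_def by (simp add: power_mult_distrib flip: complex_cnj_power)
    with False z_ne_1 show ?thesis
      unfolding terms by (simp add: geometric_sum)
  qed
qed

lemma discrete_fourier_parseval:
  fixes x y :: "nat \<Rightarrow> complex"
  assumes "k > 0"
  shows "(\<Sum>m<k. (\<Sum>i<k. unit_root k ^ (m * i) * x i) * cnj (\<Sum>i<k. unit_root k ^ (m * i) * y i))
    = of_nat k * (\<Sum>i<k. x i * cnj (y i))"
proof -
  have "(\<Sum>m<k. (\<Sum>i<k. unit_root k ^ (m * i) * x i) * cnj (\<Sum>i<k. unit_root k ^ (m * i) * y i))
      = (\<Sum>m<k. \<Sum>i<k. \<Sum>j<k. x i * cnj (y j) * (unit_root k ^ (m * i) * cnj (unit_root k ^ (m * j))))"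
    by (simp only: cnj_sum sum_product complex_cnj_mult mult_ac)
  also have "\<dots> = (\<Sum>i<k. \<Sum>j<k. x i * cnj (y j) * (\<Sum>m<k. unit_root k ^ (m * i) * cnj (unit_root k ^ (m * j))))"
    unfolding sum_distrib_left by (subst sum.swap) (rule sum.cong[OF refl], rule sum.swap)
  also have "\<dots> = (\<Sum>i<k. \<Sum>j<k. if i = j then x i * cnj (y j) * of_nat k else 0)"
    by (intro sum.cong refl, subst unit_root_orthogonal[OF assms]) auto
  also have "\<dots> = (\<Sum>i<k. x i * cnj (y i) * of_nat k)"
    by simp
  finally show ?thesis
    by (simp add: sum_distrib_left mult.commute)
qed

section \<open>Edge Laplacians\<close>

lemma cnj_of_bool [simp]: "cnj (of_bool P) = of_bool P"
  by (cases P) simp_all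

definition edge_laplacian :: "vertex \<Rightarrow> vertex \<Rightarrow> gmatrix" where
  "edge_laplacian u v x y = (of_bool (x = u) - of_bool (x = v)) * (of_bool (y = u) - of_bool (y = v))"

lemma edge_laplacian_commute: "edge_laplacian u v = edge_laplacian v u"
  unfolding edge_laplacian_def by (intro ext) (simp add: algebra_simps)

lemma separable_cone_edge_laplacian_row: "separable_cone a b (edge_laplacian (i, p) (i, q))"
  by (rule separable_cone_cong[OF separable_cone_product[of a b "\<lambda>i'. of_bool (i' = i)"
        "\<lambda>j. of_bool (j = p) - of_bool (j = q)"]])
    (auto simp: edge_laplacian_def)

lemma separable_cone_cycle:
  fixes h :: "nat \<Rightarrow> nat"
  assumes "k > 0" "h k = h 0"
  shows "separable_cone 2 b (\<lambda>x y. \<Sum>i<k. edge_laplacian (0, h i) (1, h (Suc i)) x y)"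
proof -
  define \<omega> where "\<omega> = unit_root k"
  define d :: "nat \<Rightarrow> vertex \<Rightarrow> complex"
    where "d i x = of_bool (x = (0, h i)) - of_bool (x = (1, h (Suc i)))" for i x
  define \<alpha> :: "nat \<Rightarrow> nat \<Rightarrow> complex"
    where "\<alpha> m a = (if a = 0 then 1 else - (cnj \<omega> ^ m))" for m a
  define \<beta> where "\<beta> m p = (\<Sum>i<k. \<omega> ^ (m * i) * of_bool (p = h i))" for m p
  \<comment> \<open>The m-th Fourier coefficient of the edge vectors d i is the product vector of \<alpha> m and \<beta> m.\<close>
  have shifted: "(\<Sum>i<k. \<omega> ^ (m * i) * of_bool (p = h (Suc i))) = cnj \<omega> ^ m * \<beta> m p" for m p
  proof -
    have "\<beta> m p = (\<Sum>i<k. \<omega> ^ (m * Suc i) * of_bool (p = h (Suc i)))"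
      unfolding \<beta>_def using assms
      by (intro sum_lessThan_Suc_shift_periodic[symmetric]) (simp add: \<omega>_def power_mult mult.commute[of m])
    also have "\<dots> = \<omega> ^ m * (\<Sum>i<k. \<omega> ^ (m * i) * of_bool (p = h (Suc i)))"
      by (simp only: sum_distrib_left mult_Suc_right power_add mult.assoc)
    finally show ?thesis
      unfolding \<omega>_def by (simp flip: mult.assoc power_mult_distrib)
  qed
  have factor: "(\<Sum>i<k. \<omega> ^ (m * i) * d i (a, p)) = \<alpha> m a * \<beta> m p" if "a < 2" for m a p
  proof (cases "a = 0")
    case True
    then show ?thesis by (simp add: d_def \<alpha>_def \<beta>_def)
  next
    case False
    with that have "a = 1" by simp
    then show ?thesis
      by (simp add: d_def \<alpha>_def sum_negf flip: shifted)
  qed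
  have cone: "separable_cone 2 b (\<lambda>x y. \<Sum>m<k. of_real (1 / real k) *
      (\<alpha> m (fst x) * cnj (\<alpha> m (fst y)) * (\<beta> m (snd x) * cnj (\<beta> m (snd y)))))"
    by (intro separable_cone_sum separable_cone_scale separable_cone_product) simp_all
  show ?thesis
  proof (rule separable_cone_cong[OF cone])
    fix x y assume "x \<in> grid 2 b" "y \<in> grid 2 b"
    then obtain a p a' q where xy: "x = (a, p)" "y = (a', q)" "a < 2" "a' < 2"
      unfolding grid_def by auto
    have "(\<Sum>i<k. edge_laplacian (0, h i) (1, h (Suc i)) x y) = (\<Sum>i<k. d i x * cnj (d i y))"
      by (simp add: edge_laplacian_def d_def)
    also have "\<dots> = of_real (1 / real k) *
        (\<Sum>m<k. (\<Sum>i<k. \<omega> ^ (m * i) * d i x) * cnj (\<Sum>i<k. \<omega> ^ (m * i) * d i y))"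
      unfolding \<omega>_def discrete_fourier_parseval[OF assms(1)] using assms(1) by simp
    also have "\<dots> = (\<Sum>m<k. of_real (1 / real k) *
        (\<alpha> m (fst x) * cnj (\<alpha> m (fst y)) * (\<beta> m (snd x) * cnj (\<beta> m (snd y)))))"
      unfolding xy(1,2) by (simp add: factor xy(3,4) sum_distrib_left mult_ac)
    finally show "(\<Sum>m<k. of_real (1 / real k) *
        (\<alpha> m (fst x) * cnj (\<alpha> m (fst y)) * (\<beta> m (snd x) * cnj (\<beta> m (snd y)))))
      = (\<Sum>i<k. edge_laplacian (0, h i) (1, h (Suc i)) x y)" ..
  qed
qed

lemma separable_cone_cycle_arcs:
  fixes h :: "nat \<Rightarrow> nat"
  assumes "k > 0" "h k = h 0" "inj_on h {..<k}"
  shows "separable_cone 2 b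
    (\<lambda>x y. \<Sum>a\<in>(\<lambda>i. (h i, h (Suc i))) ` {..<k}. edge_laplacian (0, fst a) (1, snd a) x y)"
proof -
  have "inj_on (\<lambda>i. (h i, h (Suc i))) {..<k}"
    using assms(3) by (auto simp: inj_on_def)
  then show ?thesis
    using separable_cone_cycle[OF assms(1,2)] by (simp add: sum.reindex)
qed

section \<open>Balanced relations\<close>

definition balanced :: "('a \<times> 'a) set \<Rightarrow> bool" where
  "balanced F \<longleftrightarrow> (\<forall>p. card {a \<in> F. fst a = p} = card {a \<in> F. snd a = p})"

lemma infinite_walk_exists:
  assumes "(x, y) \<in> F" and succ: "\<And>x y. (x, y) \<in> F \<Longrightarrow> \<exists>z. (y, z) \<in> F"
  shows "\<exists>f. \<forall>n. (f n, f (Suc n)) \<in> F"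
proof -
  define f where "f = rec_nat x (\<lambda>_ y. SOME z. (y, z) \<in> F)"
  have "(f n, f (Suc n)) \<in> F" for n
  proof (induction n)
    case 0
    show ?case
      unfolding f_def using assms(1) by (auto intro: someI)
  next
    case (Suc n)
    then show ?case
      using succ unfolding f_def by (auto intro: someI_ex)
  qed
  then show ?thesis by blast
qed

lemma walk_contains_cycle:
  assumes "finite F" and walk: "\<And>n. (f n, f (Suc n)) \<in> F"
  shows "\<exists>k h. k > 0 \<and> h k = h 0 \<and> inj_on h {..<k} \<and> (\<forall>i<k. (h i, h (Suc i)) \<in> F)"
proof -
  have "range f \<subseteq> fst ` F"
    using walk by force
  then have "\<not> inj f"
    using assms(1) by (meson finite_imageI infinite_UNIV_nat inj_on_finite)
  then obtain s t where "f s = f t" "s \<noteq> t"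
    unfolding inj_def by auto
  then have "\<exists>t s. s < t \<and> f s = f t"
  proof (cases "s < t")
    case False
    with \<open>s \<noteq> t\<close> \<open>f s = f t\<close> have "t < s" "f t = f s"
      by simp_all
    then show ?thesis by blast
  qed blast
  then obtain t s where st: "s < t" "f s = f t" and least: "\<And>t' s'. t' < t \<Longrightarrow> s' < t' \<Longrightarrow> f s' \<noteq> f t'"
    by (subst (asm) exists_least_iff) blast
  have "inj_on (\<lambda>i. f (s + i)) {..<t - s}"
    by (rule linorder_inj_onI') (use least in auto)
  with st walk show ?thesis
    by (intro exI[of _ "t - s"] exI[of _ "\<lambda>i. f (s + i)"]) auto
qed

lemma balanced_contains_cycle:
  assumes "finite F" "balanced F" "F \<noteq> {}"
  shows "\<exists>k h. k > 0 \<and> h k = h 0 \<and> inj_on h {..<k} \<and> (\<forall>i<k. (h i, h (Suc i)) \<in> F)"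
proof -
  have succ: "\<exists>z. (y, z) \<in> F" if "(x, y) \<in> F" for x y
  proof -
    have "card {a \<in> F. snd a = y} \<noteq> 0"
      using assms(1) that by (auto simp: card_eq_0_iff)
    then have "card {a \<in> F. fst a = y} \<noteq> 0"
      using assms(2) unfolding balanced_def by simp
    then show ?thesis by (auto simp: card_gt_0_iff)
  qed
  from assms(3) obtain x y where "(x, y) \<in> F"
    by auto
  then have "\<exists>f. \<forall>n. (f n, f (Suc n)) \<in> F"
    using succ by (rule infinite_walk_exists)
  then obtain f where "\<And>n. (f n, f (Suc n)) \<in> F"
    by blast
  with assms(1) show ?thesis
    by (rule walk_contains_cycle)
qed

lemma balanced_cycle_arcs:
  fixes h :: "nat \<Rightarrow> 'a"
  assumes "h k = h 0" "inj_on h {..<k}"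
  shows "balanced ((\<lambda>i. (h i, h (Suc i))) ` {..<k})"
  unfolding balanced_def
proof
  fix p
  let ?arc = "\<lambda>i. (h i, h (Suc i))"
  have inj: "inj_on ?arc A" if "A \<subseteq> {..<k}" for A
    using inj_on_subset[OF assms(2) that] by (auto simp: inj_on_def)
  have "card {a \<in> ?arc ` {..<k}. fst a = p} = card {i \<in> {..<k}. h i = p}"
    by (subst card_image[OF inj, symmetric]) (auto intro: arg_cong[where f = card])
  also have "\<dots> = (\<Sum>i<k. of_bool (h i = p))"
    by (simp add: Int_def)
  also have "\<dots> = (\<Sum>i<k. of_bool (h (Suc i) = p))"
    using assms(1) by (intro sum_lessThan_Suc_shift_periodic[symmetric]) simp
  also have "\<dots> = card {i \<in> {..<k}. h (Suc i) = p}"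
    by (simp add: Int_def)
  also have "\<dots> = card {a \<in> ?arc ` {..<k}. snd a = p}"
    by (subst card_image[OF inj, symmetric]) (auto intro: arg_cong[where f = card])
  finally show "card {a \<in> ?arc ` {..<k}. fst a = p} = card {a \<in> ?arc ` {..<k}. snd a = p}" .
qed

lemma balanced_Diff:
  assumes "finite F" "balanced F" "C \<subseteq> F" "balanced C"
  shows "balanced (F - C)"
proof -
  have split: "card {a \<in> F. P a} = card {a \<in> F - C. P a} + card {a \<in> C. P a}" for P
    using assms(1,3) by (subst card_Un_disjoint[symmetric]) (auto intro: arg_cong[where f = card] finite_subset)
  show ?thesis
    unfolding balanced_def
  proof
    fix p
    show "card {a \<in> F - C. fst a = p} = card {a \<in> F - C. snd a = p}"
      using assms(2,4) split[of "\<lambda>a. fst a = p"] split[of "\<lambda>a. snd a = p"]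
      unfolding balanced_def by simp
  qed
qed

lemma separable_cone_balanced:
  assumes "finite F" "balanced F"
  shows "separable_cone 2 b (\<lambda>x y. \<Sum>a\<in>F. edge_laplacian (0, fst a) (1, snd a) x y)"
  using assms
proof (induction "card F" arbitrary: F rule: less_induct)
  case less
  show ?case
  proof (cases "F = {}")
    case True
    then show ?thesis by (simp add: separable_cone_zero)
  next
    case False
    obtain k h where cycle: "k > 0" "h k = h 0" "inj_on h {..<k}" "\<forall>i<k. (h i, h (Suc i)) \<in> F"
      using balanced_contains_cycle[OF less.prems False] by blast
    define C where "C = (\<lambda>i. (h i, h (Suc i))) ` {..<k}"
    have "C \<subseteq> F" "C \<noteq> {}" "balanced C"
      using cycle balanced_cycle_arcs[OF cycle(2,3)] unfolding C_def by auto
    then have "balanced (F - C)" "card (F - C) < card F"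
      using less.prems by (auto intro: balanced_Diff psubset_card_mono)
    then have "separable_cone 2 b (\<lambda>x y. (\<Sum>a\<in>F - C. edge_laplacian (0, fst a) (1, snd a) x y)
        + (\<Sum>a\<in>C. edge_laplacian (0, fst a) (1, snd a) x y))"
      using less separable_cone_cycle_arcs[OF cycle(1-3)] unfolding C_def
      by (intro separable_cone_add) blast+
    with \<open>C \<subseteq> F\<close> less.prems(1) show ?thesis
      by (simp add: sum.subset_diff[symmetric])
  qed
qed

lemma grid_graph_edgeE:
  assumes "grid_graph a b E" "e \<in> E"
  obtains u v where "e = {u, v}" "u \<noteq> v" "u \<in> grid a b" "v \<in> grid a b"
  using assms unfolding grid_graph_def by blast

lemma finite_grid [simp]: "finite (grid a b)"
  unfolding grid_def by simp

lemma grid_graph_finite: "grid_graph a b E \<Longrightarrow> finite E"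
  unfolding grid_graph_def by (rule finite_subset[of _ "Pow (grid a b)"]) auto

lemma sum_adjacency_eq_card:
  "finite Q \<Longrightarrow> (\<Sum>q\<in>Q. adjacency_matrix E (f q) (g q)) = of_nat (card {q \<in> Q. {f q, g q} \<in> E})"
  unfolding adjacency_matrix_def by (simp add: sum.If_cases Int_def)

lemma adjacency_matrix_commute: "adjacency_matrix E u v = adjacency_matrix E v u"
  unfolding adjacency_matrix_def by (simp add: insert_commute)

lemma adjacency_matrix_diag: "grid_graph a b E \<Longrightarrow> adjacency_matrix E x x = 0"
  unfolding adjacency_matrix_def grid_graph_def by (auto simp: doubleton_eq_iff)

lemma adjacency_matrix_row_sum:
  assumes "grid_graph a b E"
  shows "(\<Sum>v\<in>grid a b. adjacency_matrix E u v) = of_nat (deg E u)"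
proof -
  have "(\<lambda>v. {u, v}) ` {v \<in> grid a b. {u, v} \<in> E} = {e \<in> E. u \<in> e}"
  proof (intro subset_antisym subsetI)
    fix e assume "e \<in> {e \<in> E. u \<in> e}"
    then obtain x y where "e = {x, y}" "x \<in> grid a b" "y \<in> grid a b" "u \<in> e" "e \<in> E"
      using grid_graph_edgeE[OF assms] by blast
    then show "e \<in> (\<lambda>v. {u, v}) ` {v \<in> grid a b. {u, v} \<in> E}"
      by (auto simp: insert_commute)
  qed auto
  moreover have "inj_on (\<lambda>v. {u, v}) A" for A
    by (auto simp: inj_on_def doubleton_eq_iff)
  ultimately have "card {v \<in> grid a b. {u, v} \<in> E} = deg E u"
    unfolding deg_def by (simp add: card_image flip: \<open>_ ` _ = _\<close>)
  then show ?thesis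
    using sum_adjacency_eq_card[of "grid a b" E "\<lambda>_. u" "\<lambda>v. v"] by simp
qed

lemma grid_graph_degree_sum:
  assumes "grid_graph a b E"
  shows "(\<Sum>u\<in>grid a b. deg E u) = 2 * card E"
  unfolding deg_def
proof (rule sum_multicount)
  show "finite E"
    using assms by (rule grid_graph_finite)
  show "\<forall>e\<in>E. card {u \<in> grid a b. u \<in> e} = 2"
  proof
    fix e assume "e \<in> E"
    then obtain u v where "e = {u, v}" "u \<noteq> v" "u \<in> grid a b" "v \<in> grid a b"
      using grid_graph_edgeE[OF assms] by blast
    then have "{u \<in> grid a b. u \<in> e} = {u, v}"
      by auto
    with \<open>u \<noteq> v\<close> show "card {u \<in> grid a b. u \<in> e} = 2"
      by simp
  qed
qed simp

lemma adjacency_matrix_partial_transpose: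
  "adjacency_matrix (partial_transpose E) (i, j) (i', j') = adjacency_matrix E (i, j') (i', j)"
proof -
  have "{(i, j), (i', j')} \<in> partial_transpose E \<longleftrightarrow> {(i, j'), (i', j)} \<in> E"
  proof
    assume "{(i, j), (i', j')} \<in> partial_transpose E"
    then obtain i0 j0 k l where "{(i, j), (i', j')} = {(k, j0), (i0, l)}" "{(i0, j0), (k, l)} \<in> E"
      unfolding partial_transpose_def by blast
    then show "{(i, j'), (i', j)} \<in> E"
      by (auto simp: doubleton_eq_iff insert_commute)
  next
    assume "{(i, j'), (i', j)} \<in> E"
    then have "{(i', j'), (i, j)} \<in> partial_transpose E"
      unfolding partial_transpose_def by blast
    then show "{(i, j), (i', j')} \<in> partial_transpose E"
      by (simp add: insert_commute)
  qed
  then show ?thesis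
    unfolding adjacency_matrix_def by simp
qed

lemma grid_graph_partial_transpose:
  assumes "grid_graph a b E"
  shows "grid_graph a b (partial_transpose E)"
  unfolding grid_graph_def
proof
  fix e assume "e \<in> partial_transpose E"
  then obtain i j k l where e: "e = {(k, j), (i, l)}" and "{(i, j), (k, l)} \<in> E"
    unfolding partial_transpose_def by blast
  then obtain u v where "{(i, j), (k, l)} = {u, v}" "u \<noteq> v" "u \<in> grid a b" "v \<in> grid a b"
    using grid_graph_edgeE[OF assms] by blast
  then have "(k, j) \<noteq> (i, l)" "(k, j) \<in> grid a b" "(i, l) \<in> grid a b"
    by (auto simp: doubleton_eq_iff grid_def)
  with e show "e \<in> {{u, v} |u v. u \<in> grid a b \<and> v \<in> grid a b \<and> u \<noteq> v}"
    by blast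
qed

lemma laplacian_eq_sum_edge_laplacian:
  assumes "grid_graph a b E" "x \<in> grid a b" "y \<in> grid a b"
  shows "2 * laplacian E x y
    = (\<Sum>u\<in>grid a b. \<Sum>v\<in>grid a b. adjacency_matrix E u v * edge_laplacian u v x y)"
proof -
  let ?A = "adjacency_matrix E" and ?G = "grid a b"
  note diag = adjacency_matrix_diag[OF assms(1)]
  have "?A u v * edge_laplacian u v x y
      = of_bool (x = y) * (of_bool (u = x) * ?A x v + of_bool (v = x) * ?A u x)
        - of_bool (u = x) * (of_bool (v = y) * ?A x y) - of_bool (u = y) * (of_bool (v = x) * ?A y x)"
    for u v
    by (auto simp: edge_laplacian_def diag)
  then have "(\<Sum>u\<in>?G. \<Sum>v\<in>?G. ?A u v * edge_laplacian u v x y)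
      = of_bool (x = y) * ((\<Sum>v\<in>?G. ?A x v) + (\<Sum>u\<in>?G. ?A u x)) - ?A x y - ?A y x"
    using assms(2,3)
    by (simp add: sum.distrib sum_subtractf flip: sum_distrib_left)
  also have "\<dots> = 2 * laplacian E x y"
    using adjacency_matrix_row_sum[OF assms(1), of x]
    by (simp add: laplacian_def degree_matrix_def adjacency_matrix_commute[of E _ x] diag)
  finally show ?thesis ..
qed

lemma laplacian_row_sum:
  assumes "grid_graph a b E" "x \<in> grid a b"
  shows "(\<Sum>y\<in>grid a b. laplacian E x y) = 0"
  using assms(2) adjacency_matrix_row_sum[OF assms(1), of x]
  by (simp add: laplacian_def degree_matrix_def sum_subtractf)

lemma laplacian_trace:
  assumes "grid_graph a b E"
  shows "(\<Sum>x\<in>grid a b. laplacian E x x) = of_nat (2 * card E)"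
  using grid_graph_degree_sum[OF assms]
  by (simp add: laplacian_def degree_matrix_def adjacency_matrix_diag[OF assms] flip: of_nat_sum)

lemma laplacian_partial_transpose_row_sum:
  assumes "grid_graph a b E" "i < a" "j < b"
  shows "(\<Sum>i'<a. \<Sum>j'<b. laplacian E (i, j') (i', j))
    = of_nat (deg E (i, j)) - of_nat (deg (partial_transpose E) (i, j))"
proof -
  have "(\<Sum>i'<a. \<Sum>j'<b. adjacency_matrix E (i, j') (i', j))
      = (\<Sum>v\<in>grid a b. adjacency_matrix (partial_transpose E) (i, j) v)"
    by (simp add: sum_grid adjacency_matrix_partial_transpose)
  also have "\<dots> = of_nat (deg (partial_transpose E) (i, j))"
    using grid_graph_partial_transpose[OF assms(1)] by (rule adjacency_matrix_row_sum)
  finally have "(\<Sum>i'<a. \<Sum>j'<b. adjacency_matrix E (i, j') (i', j))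
      = of_nat (deg (partial_transpose E) (i, j))" .
  moreover have "(\<Sum>i'<a. \<Sum>j'<b. degree_matrix E (i, j') (i', j)) = of_nat (deg E (i, j))"
  proof -
    have "degree_matrix E (i, j') (i', j) = (if j' = j then if i' = i then of_nat (deg E (i, j)) else 0 else 0)"
      for i' j'
      by (auto simp: degree_matrix_def)
    with assms(2,3) show ?thesis
      by simp
  qed
  ultimately show ?thesis
    by (simp add: laplacian_def sum_subtractf)
qed

lemma degree_matrix_eq_iff:
  "(\<forall>u\<in>V. \<forall>v\<in>V. degree_matrix E u v = degree_matrix E' u v) \<longleftrightarrow> (\<forall>w\<in>V. deg E w = deg E' w)"
  by (auto simp: degree_matrix_def)

section \<open>Separability forces equal degrees\<close>

theorem separable_rho_imp_degree_eq:
  assumes "grid_graph a b E" "E \<noteq> {}" "separable a b (rho E)" "w \<in> grid a b"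
  shows "deg E w = deg (partial_transpose E) w"
proof -
  obtain i j where w: "w = (i, j)" "i < a" "j < b"
    using assms(4) unfolding grid_def by auto
  have m: "of_nat (2 * card E) \<noteq> (0 :: complex)"
    using assms(1,2) grid_graph_finite by auto
  have "(\<Sum>u\<in>grid a b. \<Sum>v\<in>grid a b. rho E u v) = 0"
    using laplacian_row_sum[OF assms(1)] by (simp add: rho_def flip: sum_divide_distrib)
  then have "(\<Sum>i'<a. \<Sum>j'<b. rho E (i, j') (i', j)) = 0"
    using assms(3) w by (intro separable_cone_partial_transpose_row_sum) (auto simp: separable_iff_cone)
  then have "(\<Sum>i'<a. \<Sum>j'<b. laplacian E (i, j') (i', j)) = 0"
    using m by (simp add: rho_def flip: sum_divide_distrib)
  with laplacian_partial_transpose_row_sum[OF assms(1) w(2,3)] show ?thesis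
    unfolding w(1) by simp
qed

section \<open>Equal degrees force separability on two rows\<close>

definition arcs_between :: "vertex set set \<Rightarrow> nat \<Rightarrow> nat \<Rightarrow> nat \<Rightarrow> (nat \<times> nat) set" where
  "arcs_between E b i i' = {a \<in> {..<b} \<times> {..<b}. {(i, fst a), (i', snd a)} \<in> E}"

lemma finite_arcs_between [simp]: "finite (arcs_between E b i i')"
  unfolding arcs_between_def by (rule finite_subset[of _ "{..<b} \<times> {..<b}"]) auto

lemma sum_adjacency_block:
  "(\<Sum>p<b. \<Sum>q<b. adjacency_matrix E (i, p) (i', q) * f p q)
    = (\<Sum>a\<in>arcs_between E b i i'. f (fst a) (snd a))"
proof -
  have "(\<Sum>p<b. \<Sum>q<b. adjacency_matrix E (i, p) (i', q) * f p q)
      = (\<Sum>(p, q)\<in>{..<b} \<times> {..<b}. of_bool ({(i, p), (i', q)} \<in> E) * f p q)"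
    unfolding adjacency_matrix_def of_bool_def[symmetric] by (rule sum.cartesian_product)
  then show ?thesis
    unfolding arcs_between_def by (simp add: Int_def case_prod_beta)
qed

lemma arcs_between_swap: "arcs_between E b i' i = prod.swap ` arcs_between E b i i'"
  unfolding arcs_between_def by (auto simp: insert_commute image_iff)

lemma laplacian_two_rows:
  assumes "grid_graph 2 b E" "x \<in> grid 2 b" "y \<in> grid 2 b"
  shows "2 * laplacian E x y
    = (\<Sum>i<2. \<Sum>a\<in>arcs_between E b i i. edge_laplacian (i, fst a) (i, snd a) x y)
      + 2 * (\<Sum>a\<in>arcs_between E b 0 1. edge_laplacian (0, fst a) (1, snd a) x y)"
proof -
  define S where "S i i' = (\<Sum>a\<in>arcs_between E b i i'. edge_laplacian (i, fst a) (i', snd a) x y)" for i i'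
  have "2 * laplacian E x y = (\<Sum>i<2. \<Sum>p<b. \<Sum>i'<2. \<Sum>q<b.
      adjacency_matrix E (i, p) (i', q) * edge_laplacian (i, p) (i', q) x y)"
    using laplacian_eq_sum_edge_laplacian[OF assms] by (simp add: sum_grid)
  also have "\<dots> = (\<Sum>i<2. \<Sum>i'<2. \<Sum>p<b. \<Sum>q<b.
      adjacency_matrix E (i, p) (i', q) * edge_laplacian (i, p) (i', q) x y)"
    by (rule sum.cong[OF refl], rule sum.swap)
  also have "\<dots> = (\<Sum>i<2. \<Sum>i'<2. S i i')"
    unfolding S_def by (simp only: sum_adjacency_block)
  also have "S 1 0 = S 0 1"
    unfolding S_def arcs_between_swap[of E b 1 0]
    by (simp add: sum.reindex edge_laplacian_commute)
  ultimately show ?thesis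
    by (simp add: S_def eval_nat_numeral)
qed

lemma balanced_cross_arcs:
  assumes "grid_graph 2 b E" "\<forall>w\<in>grid 2 b. deg E w = deg (partial_transpose E) w"
  shows "balanced (arcs_between E b 0 1)"
  unfolding balanced_def
proof
  fix p
  show "card {a \<in> arcs_between E b 0 1. fst a = p} = card {a \<in> arcs_between E b 0 1. snd a = p}"
  proof (cases "p < b")
    case True
    have "of_nat (deg E (0, p))
        = (\<Sum>q<b. adjacency_matrix E (0, p) (0, q)) + (\<Sum>q<b. adjacency_matrix E (0, p) (1, q))"
      unfolding adjacency_matrix_row_sum[OF assms(1), symmetric] by (simp add: sum_grid eval_nat_numeral)
    moreover have "of_nat (deg (partial_transpose E) (0, p))
        = (\<Sum>q<b. adjacency_matrix E (0, p) (0, q)) + (\<Sum>q<b. adjacency_matrix E (0, q) (1, p))"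
      unfolding adjacency_matrix_row_sum[OF grid_graph_partial_transpose[OF assms(1)], symmetric]
      by (simp add: sum_grid eval_nat_numeral adjacency_matrix_partial_transpose adjacency_matrix_commute[of E "(0, _)" "(0, _)"])
    moreover have "deg E (0, p) = deg (partial_transpose E) (0, p)"
      using assms(2) True by (simp add: grid_def)
    ultimately have "card {q \<in> {..<b}. {(0, p), (1, q)} \<in> E} = card {q \<in> {..<b}. {(0, q), (1, p)} \<in> E}"
      by (simp add: sum_adjacency_eq_card)
    moreover have "{a \<in> arcs_between E b 0 1. fst a = p} = Pair p ` {q \<in> {..<b}. {(0, p), (1, q)} \<in> E}"
      "{a \<in> arcs_between E b 0 1. snd a = p} = (\<lambda>q. (q, p)) ` {q \<in> {..<b}. {(0, q), (1, p)} \<in> E}"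
      using True by (auto simp: arcs_between_def)
    ultimately show ?thesis
      by (simp add: card_image inj_on_def)
  next
    case False
    then have "{a \<in> arcs_between E b 0 1. fst a = p} = {}" "{a \<in> arcs_between E b 0 1. snd a = p} = {}"
      by (auto simp: arcs_between_def)
    then show ?thesis
      by (simp only: card.empty)
  qed
qed

theorem degree_eq_imp_separable_rho:
  assumes "grid_graph 2 b E" "E \<noteq> {}" "\<forall>w\<in>grid 2 b. deg E w = deg (partial_transpose E) w"
  shows "separable 2 b (rho E)"
proof -
  have m: "card E > 0"
    using assms(1,2) grid_graph_finite card_gt_0_iff by blast
  have "separable_cone 2 b (\<lambda>x y. (\<Sum>i<2. \<Sum>a\<in>arcs_between E b i i. edge_laplacian (i, fst a) (i, snd a) x y)
      + of_real 2 * (\<Sum>a\<in>arcs_between E b 0 1. edge_laplacian (0, fst a) (1, snd a) x y))"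
    using balanced_cross_arcs[OF assms(1,3)]
    by (intro separable_cone_add separable_cone_sum separable_cone_scale separable_cone_balanced
        separable_cone_edge_laplacian_row) simp_all
  then have "separable_cone 2 b (\<lambda>x y. of_real (1 / (4 * card E)) * (2 * laplacian E x y))"
    by (intro separable_cone_scale) (auto elim!: separable_cone_cong simp: laplacian_two_rows[OF assms(1)])
  then have "separable_cone 2 b (rho E)"
    by (rule separable_cone_cong) (simp add: rho_def)
  moreover have "(\<Sum>u\<in>grid 2 b. rho E u u) = 1"
    using laplacian_trace[OF assms(1)] m by (simp add: rho_def flip: sum_divide_distrib)
  ultimately show ?thesis
    by (simp add: separable_iff_cone)
qed

theorem mainTheorem5:
  fixes b :: nat and E :: "vertex set set"
  assumes "b \<ge> 2"
    and "grid_graph 2 b E"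
    and "E \<noteq> {}"
  shows "separable 2 b (rho E) \<longleftrightarrow>
         (\<forall>u\<in>grid 2 b. \<forall>v\<in>grid 2 b.
            degree_matrix E u v = degree_matrix (partial_transpose E) u v)"
  unfolding degree_matrix_eq_iff
  using separable_rho_imp_degree_eq[OF assms(2,3)] degree_eq_imp_separable_rho[OF assms(2,3)] by blast

end
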